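(* Let $q$ be a nonzero complex number with $q^4\neq1$ and let $\zeta,\zeta'$ be nonzero complex numbers with $\zeta,\zeta',\zeta\zeta'\neq\pm1$. Let $\phi:V(\zeta)\otimes V(\zeta')\to V(\zeta')\otimes V(\zeta)$ be a grading-preserving $U_q(\mathfrak{sl}(1|1))$-module homomorphism, and let $a_1,a_2,b_1,b_2,c_1,c_2$ be the constants with \[\phi(x\otimes x')=a_2\,x'\otimes x,\ \phi(x\otimes y')=c_2\,x'\otimes y+b_2\,y'\otimes x,\ \phi(y\otimes x')=b_1\,x'\otimes y+c_1\,y'\otimes x,\ \phi(y\otimes y')=a_1\,y'\otimes y\] (where $x,y$ and $x',y'$ are the standard bases). Then $a_1a_2+b_1b_2=c_1c_2$.
   Context: $[\zeta]=\frac{\zeta-\zeta^{-1}}{q-q^{-1}}$. $U_q(\mathfrak{sl}(1|1))$ is the associative superalgebra generated by odd $E,F$ and even invertible central $W^{\pm1}$ with $EF+FE=\frac{W-W^{-1}}{q-q^{-1}}$, $E^2=F^2=0$, comultiplication $\Delta(W)=W\otimes W$, $\Delta(E)=E\otimes W^{-1}+1\otimes E$, $\Delta(F)=F\otimes1+W\otimes F$, and tensor products of modules with sign rule $(a\otimes b)(v\otimes w)=(-1)^{|b||v|}(av\otimes bw)$. $V(\zeta)$ has basis $x$ (even), $y$ (odd) with $Ex=0$, $Fx=y$, $Wx=\zeta x$, $Fy=0$, $Ey=[\zeta]x$, $Wy=\zeta y$; $V(\zeta')$ likewise with basis $x',y'$. (Under these hypotheses every such homomorphism has the displayed form.) *)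

theory Defs
  imports Complex_Main
begin

definition qbr :: "complex \<Rightarrow> complex \<Rightarrow> complex" where
  "qbr q z = (z - inverse z) / (q - inverse q)"

text \<open>Generators of U_q(sl(1|1)) acting on modules (W^-1 included), and the
  operators occurring in tensor factors of their coproducts.\<close>
datatype gen = GE | GF | GW | GWinv
datatype op = One | OE | OF | OW | OWinv

fun op_par :: "op \<Rightarrow> bool" where
  "op_par One = False" | "op_par OE = True" | "op_par OF = True"
| "op_par OW = False" | "op_par OWinv = False"

text \<open>Basis of V(zeta): False = x (even), True = y (odd); the parity of a
  basis vector is the boolean itself. Vectors are coordinate functions
  bool => complex.  act q z a b = the vector a.b in V(z).\<close>
fun act :: "complex \<Rightarrow> complex \<Rightarrow> op \<Rightarrow> bool \<Rightarrow> bool \<Rightarrow> complex" where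
  "act q z One b = (\<lambda>i. if i = b then 1 else 0)"
| "act q z OW b = (\<lambda>i. if i = b then z else 0)"
| "act q z OWinv b = (\<lambda>i. if i = b then inverse z else 0)"
| "act q z OE b = (\<lambda>i. if b \<and> \<not> i then qbr q z else 0)"
| "act q z OF b = (\<lambda>i. if \<not> b \<and> i then 1 else 0)"

fun coprod :: "gen \<Rightarrow> (op \<times> op) list" where
  "coprod GW = [(OW, OW)]"
| "coprod GWinv = [(OWinv, OWinv)]"
| "coprod GE = [(OE, OWinv), (One, OE)]"
| "coprod GF = [(OF, One), (OW, OF)]"

text \<open>Action of a generator on V(z1) (x) V(z2), vectors being coordinate
  functions on basis pairs (v, w), with the sign rule
  (a (x) b)(v (x) w) = (-1)^{|b||v|} (a v (x) b w).\<close>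
definition tens_act ::
  "complex \<Rightarrow> complex \<Rightarrow> complex \<Rightarrow> gen \<Rightarrow> (bool \<times> bool \<Rightarrow> complex) \<Rightarrow> (bool \<times> bool \<Rightarrow> complex)" where
  "tens_act q z1 z2 g u = (\<lambda>(i, j).
     \<Sum>ab \<leftarrow> coprod g. \<Sum>vw \<in> (UNIV :: (bool \<times> bool) set).
        u vw * (if op_par (snd ab) \<and> fst vw then -1 else 1)
             * act q z1 (fst ab) (fst vw) i * act q z2 (snd ab) (snd vw) j)"

definition tb :: "bool \<Rightarrow> bool \<Rightarrow> bool \<times> bool \<Rightarrow> complex" where
  "tb v w = (\<lambda>k. if k = (v, w) then 1 else 0)"

definition is_hom :: "complex \<Rightarrow> complex \<Rightarrow> complex \<Rightarrow>
    ((bool \<times> bool \<Rightarrow> complex) \<Rightarrow> (bool \<times> bool \<Rightarrow> complex)) \<Rightarrow> bool" where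
  "is_hom q z1 z2 \<phi> \<longleftrightarrow>
     (\<forall>u v. \<phi> (\<lambda>k. u k + v k) = (\<lambda>k. \<phi> u k + \<phi> v k)) \<and>
     (\<forall>c u. \<phi> (\<lambda>k. c * u k) = (\<lambda>k. c * \<phi> u k)) \<and>
     (\<forall>g u. \<phi> (tens_act q z1 z2 g u) = tens_act q z2 z1 g (\<phi> u))"

text \<open>Grading-preserving: maps homogeneous vectors of parity p to vectors of parity p
  (parity of v (x) w is |v| + |w|).\<close>
definition grading_preserving ::
  "((bool \<times> bool \<Rightarrow> complex) \<Rightarrow> (bool \<times> bool \<Rightarrow> complex)) \<Rightarrow> bool" where
  "grading_preserving \<phi> \<longleftrightarrow>
     (\<forall>u p. (\<forall>v w. u (v, w) \<noteq> 0 \<longrightarrow> (v \<noteq> w) = p) \<longrightarrow>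
        (\<forall>v w. \<phi> u (v, w) \<noteq> 0 \<longrightarrow> (v \<noteq> w) = p))"

end

theory Submission
  imports Defs
begin

text \<open>Applying \<open>\<phi> \<circ> F = F \<circ> \<phi>\<close> to \<open>x \<otimes> x'\<close>,
  \<open>x \<otimes> y'\<close> and \<open>y \<otimes> x'\<close> and comparing coefficients gives \<open>a\<^sub>2 = c\<^sub>1 + \<zeta> b\<^sub>2\<close>,
  \<open>a\<^sub>1 = c\<^sub>2 - \<zeta>' b\<^sub>2\<close> and \<open>b\<^sub>1 = \<zeta>' c\<^sub>1 - \<zeta> a\<^sub>1\<close>; substituting these into
  \<open>a\<^sub>1 a\<^sub>2 + b\<^sub>1 b\<^sub>2\<close> leaves \<open>c\<^sub>1 c\<^sub>2\<close>.\<close>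

lemma UNIV_bool_prod:
  "(UNIV :: (bool \<times> bool) set) = {(False, False), (False, True), (True, False), (True, True)}"
  by (auto simp: UNIV_bool)

text \<open>The sign in the \<open>(True, True)\<close> coordinate is the super sign rule for \<open>W \<otimes> F\<close>
  acting on \<open>y \<otimes> x'\<close>.\<close>
lemma tens_act_GF:
  "tens_act q z1 z2 GF u (i, j) =
     (if i \<and> j then u (False, True) - z1 * u (True, False)
      else if i then u (False, False)
      else if j then z1 * u (False, False)
      else 0)"
  by (cases i; cases j) (simp_all add: tens_act_def UNIV_bool_prod)

lemma tens_act_GF_tb_False_False:
  "tens_act q z1 z2 GF (tb False False) = (\<lambda>k. tb True False k + z1 * tb False True k)"
  by (auto simp: fun_eq_iff tens_act_GF tb_def)

lemma tens_act_GF_tb_False_True: "tens_act q z1 z2 GF (tb False True) = tb True True"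
  by (auto simp: fun_eq_iff tens_act_GF tb_def)

lemma tens_act_GF_tb_True_False:
  "tens_act q z1 z2 GF (tb True False) = (\<lambda>k. - z1 * tb True True k)"
  by (auto simp: fun_eq_iff tens_act_GF tb_def)

lemma F_equivariant_coefficients:
  fixes \<phi> :: "(bool \<times> bool \<Rightarrow> complex) \<Rightarrow> (bool \<times> bool \<Rightarrow> complex)"
  assumes add: "\<And>u v. \<phi> (\<lambda>k. u k + v k) = (\<lambda>k. \<phi> u k + \<phi> v k)"
    and scale: "\<And>c u. \<phi> (\<lambda>k. c * u k) = (\<lambda>k. c * \<phi> u k)"
    and F_comm: "\<And>u. \<phi> (tens_act q z z' GF u) = tens_act q z' z GF (\<phi> u)"
    and xx: "\<phi> (tb False False) = (\<lambda>k. a2 * tb False False k)"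
    and xy: "\<phi> (tb False True) = (\<lambda>k. c2 * tb False True k + b2 * tb True False k)"
    and yx: "\<phi> (tb True False) = (\<lambda>k. b1 * tb False True k + c1 * tb True False k)"
    and yy: "\<phi> (tb True True) = (\<lambda>k. a1 * tb True True k)"
  shows "a2 = c1 + z * b2" and "a1 = c2 - z' * b2" and "b1 = z' * c1 - z * a1"
proof -
  have "(\<lambda>k. \<phi> (tb True False) k + z * \<phi> (tb False True) k) = tens_act q z' z GF (\<phi> (tb False False))"
    using F_comm[of "tb False False"] by (simp add: tens_act_GF_tb_False_False add scale)
  from fun_cong[OF this, of "(True, False)"] show "a2 = c1 + z * b2"
    unfolding xx xy yx by (simp add: tens_act_GF tb_def)
  have "\<phi> (tb True True) = tens_act q z' z GF (\<phi> (tb False True))"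
    using F_comm[of "tb False True"] by (simp add: tens_act_GF_tb_False_True)
  from fun_cong[OF this, of "(True, True)"] show "a1 = c2 - z' * b2"
    unfolding xy yy by (simp add: tens_act_GF tb_def)
  have "(\<lambda>k. - z * \<phi> (tb True True) k) = tens_act q z' z GF (\<phi> (tb True False))"
    using F_comm[of "tb True False"] by (simp only: tens_act_GF_tb_True_False scale)
  from fun_cong[OF this, of "(True, True)"] show "b1 = z' * c1 - z * a1"
    unfolding yx yy by (simp add: tens_act_GF tb_def algebra_simps)
qed

theorem proposition5p2:
  fixes q z z' a1 a2 b1 b2 c1 c2 :: complex
    and \<phi> :: "(bool \<times> bool \<Rightarrow> complex) \<Rightarrow> (bool \<times> bool \<Rightarrow> complex)"
  assumes "q \<noteq> 0" and "q ^ 4 \<noteq> 1"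
    and "z \<noteq> 0" and "z' \<noteq> 0"
    and "z \<noteq> 1" and "z \<noteq> -1" and "z' \<noteq> 1" and "z' \<noteq> -1"
    and "z * z' \<noteq> 1" and "z * z' \<noteq> -1"
    and "is_hom q z z' \<phi>" and "grading_preserving \<phi>"
    and "\<phi> (tb False False) = (\<lambda>k. a2 * tb False False k)"
    and "\<phi> (tb False True) = (\<lambda>k. c2 * tb False True k + b2 * tb True False k)"
    and "\<phi> (tb True False) = (\<lambda>k. b1 * tb False True k + c1 * tb True False k)"
    and "\<phi> (tb True True) = (\<lambda>k. a1 * tb True True k)"
  shows "a1 * a2 + b1 * b2 = c1 * c2"
proof -
  from \<open>is_hom q z z' \<phi>\<close> have
    "\<And>u v. \<phi> (\<lambda>k. u k + v k) = (\<lambda>k. \<phi> u k + \<phi> v k)"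
    "\<And>c u. \<phi> (\<lambda>k. c * u k) = (\<lambda>k. c * \<phi> u k)"
    "\<And>u. \<phi> (tens_act q z z' GF u) = tens_act q z' z GF (\<phi> u)"
    unfolding is_hom_def by blast+
  from F_equivariant_coefficients[OF this assms(13-16)]
  have a2: "a2 = c1 + z * b2" and a1: "a1 = c2 - z' * b2" and b1: "b1 = z' * c1 - z * a1" .
  have "a1 * a2 + b1 * b2 = a1 * (c1 + z * b2) + (z' * c1 - z * a1) * b2"
    by (simp only: a2 b1)
  also have "\<dots> = c1 * (a1 + z' * b2)"
    by (simp add: algebra_simps)
  also have "\<dots> = c1 * c2"
    by (simp add: a1)
  finally show ?thesis .
qed

end
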